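(* Let $F=\{F_n\}_{n\in\mathbb{Z}}$ be a sequence with values in $\mathbb{D}$ such that $F_n=0$ for $n<n_0$ (for some $n_0\in\mathbb{Z}$) and $F_n\to0$ as $n\to+\infty$. Then there is an absolute constant $C$ such that, for all sufficiently large $n$, $$\big|\arg\mathfrak{a}^{( * )}(z,F^{\langle n\rangle})-\arg\mathfrak{a}^{( * )}(z,F^{\langle n-1\rangle})\big|\leqslant C|F_n|\quad\text{uniformly in }z\in\overline{\mathbb{D}},$$ and in particular this difference tends to $0$ uniformly in $z\in\overline{\mathbb{D}}$ as $n\to\infty$.
   Context: $\mathbb{T}$, $\mathbb{D}$ denote the unit circle and open unit disc; $m$ is normalized Lebesgue measure on $\mathbb{T}$. $F^{\langle N\rangle}_n=F_n\chi_{|n|\leqslant N}$. For a finitely supported $G$ with values in $\mathbb{D}$: $\widetilde X_n(z)=I$ below the support, $\widetilde X_n=(1-|G_n|^2)^{-1/2}\begin{pmatrix}1&\overline{G_n}z^{-n}\\ G_nz^n&1\end{pmatrix}\widetilde X_{n-1}$, and above the support $\widetilde X_n=\begin{pmatrix}\mathfrak{a}(z,G)&\mathfrak{b}^{( * )}(z,G)\\ \mathfrak{b}(z,G)&\mathfrak{a}^{( * )}(z,G)\end{pmatrix}$ with $f^{( * )}(z)=\overline{f(\bar z^{-1})}$. The function $\mathfrak{a}^{( * )}(\cdot,G)$ is analytic in $\mathbb{D}$, continuous and nonvanishing on $\overline{\mathbb{D}}$, outer, with $\mathfrak{a}^{( * )}(0,G)>0$; its argument $\arg\mathfrak{a}^{(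 * )}(z,G)$ is the continuous branch on $\overline{\mathbb{D}}$ with value $0$ at $z=0$, i.e. $\frac12\int_{\mathbb{T}}\operatorname{Im}\frac{\xi+z}{\xi-z}\log(1+|\mathfrak{b}(\xi,G)|^2)\,dm(\xi)$ in $\mathbb{D}$, extended to $\mathbb{T}$ by the corresponding principal-value (Hilbert transform) integral. *)

theory Defs
  imports "HOL-Analysis.Analysis"
begin

text \<open>2x2 complex matrices as quadruples (a,b,c,d) standing for [[a,b],[c,d]].\<close>
type_synonym m2 = "complex \<times> complex \<times> complex \<times> complex"

definition m2_mult :: "m2 \<Rightarrow> m2 \<Rightarrow> m2" where
  "m2_mult X Y = (case X of (a,b,c,d) \<Rightarrow> case Y of (e,f,g,h) \<Rightarrow>
      (a*e + b*g, a*f + b*h, c*e + d*g, c*f + d*h))"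

definition m2_id :: m2 where "m2_id = (1,0,0,1)"

definition nlft_factor :: "(int \<Rightarrow> complex) \<Rightarrow> int \<Rightarrow> complex \<Rightarrow> m2" where
  "nlft_factor G n z =
     (let s = complex_of_real (1 / sqrt (1 - (cmod (G n))\<^sup>2)) in
      (s, s * cnj (G n) * z powi (-n), s * G n * z powi n, s))"

definition supp_bound :: "(int \<Rightarrow> complex) \<Rightarrow> int" where
  "supp_bound G = (if {n. G n \<noteq> 0} = {} then 0 else Max (abs ` {n. G n \<noteq> 0}))"

text \<open>The transfer matrix above the support: X = M_N \<dots> M_(-N), with N a bound
  of the support (factors outside the support are the identity).\<close>
definition nlft_matrix :: "(int \<Rightarrow> complex) \<Rightarrow> complex \<Rightarrow> m2" where
  "nlft_matrix G z =
     foldl (\<lambda>X n. m2_mult (nlft_factor G n z) X) m2_id [- supp_bound G .. supp_bound G]"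

text \<open>a(z,G) = entry (1,1), b(z,G) = entry (2,1), a^(*)(z,G) = entry (2,2),
  for z \<noteq> 0; a^(*) is extended to z = 0 by its limit (it is a polynomial in z).\<close>
definition nlft_a :: "(int \<Rightarrow> complex) \<Rightarrow> complex \<Rightarrow> complex" where
  "nlft_a G z = (case nlft_matrix G z of (a,b,c,d) \<Rightarrow> a)"

definition nlft_b :: "(int \<Rightarrow> complex) \<Rightarrow> complex \<Rightarrow> complex" where
  "nlft_b G z = (case nlft_matrix G z of (a,b,c,d) \<Rightarrow> c)"

definition nlft_astar_raw :: "(int \<Rightarrow> complex) \<Rightarrow> complex \<Rightarrow> complex" where
  "nlft_astar_raw G z = (case nlft_matrix G z of (a,b,c,d) \<Rightarrow> d)"

definition nlft_astar :: "(int \<Rightarrow> complex) \<Rightarrow> complex \<Rightarrow> complex" where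
  "nlft_astar G z = (if z = 0 then Lim (at 0) (nlft_astar_raw G) else nlft_astar_raw G z)"

text \<open>arg a^(*)(z,G): the continuous branch of the argument on the closed unit disc
  with value 0 at z = 0 (set to 0 outside the closed disc to make it unique).\<close>
definition arg_astar :: "(int \<Rightarrow> complex) \<Rightarrow> complex \<Rightarrow> real" where
  "arg_astar G = (THE \<theta>. continuous_on (cball 0 1) \<theta> \<and> \<theta> 0 = 0 \<and>
      (\<forall>w\<in>cball 0 1. nlft_astar G w = complex_of_real (cmod (nlft_astar G w)) * cis (\<theta> w)) \<and>
      (\<forall>w. w \<notin> cball 0 1 \<longrightarrow> \<theta> w = 0))"

definition trunc :: "(int \<Rightarrow> complex) \<Rightarrow> int \<Rightarrow> int \<Rightarrow> complex" where
  "trunc F N n = (if \<bar>n\<bar> \<le> N then F n else 0)"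

end

theory Submission
  imports Defs
begin

text \<open>Between \<open>F\<^bsup><n-1>\<^esup>\<close> and \<open>F\<^bsup><n>\<^esup>\<close> only the factor at index \<open>n\<close> changes (the one at \<open>-n\<close> is
  trivial once \<open>-n\<close> lies below the support). Following the last column \<open>(b\<^sup>*, a\<^sup>*)\<close> of the transfer
  matrix, this factor gives \<open>a\<^sup>*(z,F\<^bsup><n>\<^esup>) = t (a\<^sup>* + F\<^sub>n z\<^sup>n b\<^sup>*)(z,F\<^bsup><n-1>\<^esup>)\<close> with \<open>t > 0\<close>. Since
  \<open>|a + g b|\<^sup>2 - |b + cnj g a|\<^sup>2 = (1 - |g|\<^sup>2)(|a|\<^sup>2 - |b|\<^sup>2)\<close> and \<open>|z| \<le> 1\<close> only shrinks the second entry,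
  \<open>|z\<^sup>n b\<^sup>*| < |a\<^sup>*|\<close> on the closed disc. Hence the quotient of the two \<open>a\<^sup>*\<close> is \<open>t (1 + u)\<close> with
  \<open>|u| \<le> |F\<^sub>n|\<close>. Continuous arguments on the disc normalised at \<open>0\<close> are unique, so the two
  arguments differ by \<open>Arg (1 + u)\<close>, which is at most \<open>2 |F\<^sub>n|\<close> once \<open>|F\<^sub>n| < 1/2\<close>.\<close>

definition nlft_scale :: "(int \<Rightarrow> complex) \<Rightarrow> int \<Rightarrow> real" where
  "nlft_scale G n = 1 / sqrt (1 - (cmod (G n))\<^sup>2)"

text \<open>The last column of \<open>M\<^sub>n \<cdots> M\<^sub>m\<close>, stored as \<open>(a\<^sup>*, z\<^bsup>n+1\<^esup> b\<^sup>*)\<close> so that its recursion is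
  polynomial in \<open>z\<close>.\<close>
definition column_step ::
    "(int \<Rightarrow> complex) \<Rightarrow> complex \<Rightarrow> complex \<times> complex \<Rightarrow> int \<Rightarrow> complex \<times> complex" where
  "column_step G z p n =
     (of_real (nlft_scale G n) * (fst p + G n * snd p),
      of_real (nlft_scale G n) * z * (snd p + cnj (G n) * fst p))"

abbreviation factor_step :: "(int \<Rightarrow> complex) \<Rightarrow> complex \<Rightarrow> m2 \<Rightarrow> int \<Rightarrow> m2" where
  "factor_step G z \<equiv> \<lambda>X n. m2_mult (nlft_factor G n z) X"

lemma nlft_scale_pos: "cmod (G n) < 1 \<Longrightarrow> nlft_scale G n > 0"
  by (simp add: nlft_scale_def abs_square_less_1)

lemma column_step_factor_step:
  assumes "z \<noteq> 0"
  shows "column_step G z (snd (snd (snd X)), z powi n * fst (snd X)) n =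
         (snd (snd (snd (factor_step G z X n))), z powi (n + 1) * fst (snd (factor_step G z X n)))"
proof -
  obtain x1 x2 x3 x4 where X: "X = (x1, x2, x3, x4)" by (cases X) auto
  define s where "s = complex_of_real (nlft_scale G n)"
  have factor: "nlft_factor G n z = (s, s * cnj (G n) * z powi (-n), s * G n * z powi n, s)"
    by (simp add: nlft_factor_def nlft_scale_def s_def Let_def)
  have shift: "z powi (n + 1) = z powi n * z" using assms by (simp add: power_int_add)
  have cancel: "z powi n * z powi (-n) = 1" using assms by (simp add: power_int_minus field_simps)
  show ?thesis using shift cancel
    by (simp add: X column_step_def m2_mult_def factor s_def[symmetric] algebra_simps)
qed

lemma foldl_column_step:
  assumes "z \<noteq> 0" "m \<le> n + 1"
  shows "foldl (column_step G z) (snd (snd (snd X)), z powi m * fst (snd X)) [m..n] =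
         (snd (snd (snd (foldl (factor_step G z) X [m..n]))),
          z powi (n + 1) * fst (snd (foldl (factor_step G z) X [m..n])))"
  using assms(2)
proof (induction m arbitrary: X rule: int_le_induct)
  case base
  then show ?case by simp
next
  case (step i)
  have "[i - 1..n] = (i - 1) # [i..n]" using step.hyps by (simp add: upto_rec1)
  then show ?case
    using step.IH[of "factor_step G z X (i - 1)"] column_step_factor_step[OF assms(1), of G X "i - 1"]
    by simp
qed

lemma foldl_factor_step_vanishing:
  assumes "\<forall>i\<in>set ns. G i = 0"
  shows "foldl (factor_step G z) X ns = X"
  using assms
proof (induction ns arbitrary: X)
  case Nil
  then show ?case by simp
next
  case (Cons n ns)
  obtain x1 x2 x3 x4 where "X = (x1, x2, x3, x4)" by (cases X) auto
  then have "factor_step G z X n = X" using Cons.prems by (simp add: m2_mult_def nlft_factor_def)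
  then show ?case using Cons by simp
qed

lemma supp_bound_nonneg: "finite {n. G n \<noteq> 0} \<Longrightarrow> 0 \<le> supp_bound G"
  by (auto simp: supp_bound_def Max_ge_iff)

lemma abs_le_supp_bound: "finite {n. G n \<noteq> 0} \<Longrightarrow> G n \<noteq> 0 \<Longrightarrow> \<bar>n\<bar> \<le> supp_bound G"
  by (auto simp: supp_bound_def)

lemma supp_bound_le:
  assumes "{n. G n \<noteq> 0} \<subseteq> {-M..M}" "0 \<le> M"
  shows "supp_bound G \<le> M"
proof -
  have "finite {n. G n \<noteq> 0}" using assms(1) finite_subset by blast
  then show ?thesis
    using assms by (auto simp: supp_bound_def abs_le_iff subset_iff)
qed

lemma nlft_matrix_eq_foldl:
  assumes "{n. G n \<noteq> 0} \<subseteq> {-M..M}" "0 \<le> M"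
  shows "nlft_matrix G z = foldl (factor_step G z) m2_id [-M..M]"
proof -
  define S where "S = supp_bound G"
  have fin: "finite {n. G n \<noteq> 0}" using assms(1) finite_subset by blast
  have S: "0 \<le> S" "S \<le> M" using supp_bound_nonneg[OF fin] supp_bound_le[OF assms] by (auto simp: S_def)
  have split: "[-M..M] = [-M..-S-1] @ [-S..S] @ [S+1..M]"
    using S by (simp add: upto_split1[of "-M" "-S" M] upto_split2[of "-S" S M])
  have "\<forall>n\<in>set [-M..-S-1]. G n = 0" "\<forall>n\<in>set [S+1..M]. G n = 0"
    using abs_le_supp_bound[OF fin] by (force simp: S_def)+
  then show ?thesis
    unfolding split foldl_append by (simp add: foldl_factor_step_vanishing nlft_matrix_def S_def)
qed

lemma nlft_astar_raw_eq_foldl: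
  assumes "{n. G n \<noteq> 0} \<subseteq> {-M..M}" "0 \<le> M" "z \<noteq> 0"
  shows "nlft_astar_raw G z = fst (foldl (column_step G z) (1, 0) [-M..M])"
  using foldl_column_step[OF assms(3), of "-M" M G m2_id] assms(2)
  by (simp add: m2_id_def nlft_astar_raw_def nlft_matrix_eq_foldl[OF assms(1,2)] split: prod.splits)

lemma continuous_on_foldl_column_step:
  "continuous_on S p \<Longrightarrow> continuous_on S (\<lambda>z. foldl (column_step G z) (p z) ns)"
proof (induction ns arbitrary: p)
  case Nil
  then show ?case by simp
next
  case (Cons n ns)
  have "continuous_on S (\<lambda>z. column_step G z (p z) n)"
    unfolding column_step_def by (intro continuous_intros Cons.prems)
  then show ?case using Cons.IH by simp
qed

lemma nlft_astar_eq_foldl: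
  assumes "{n. G n \<noteq> 0} \<subseteq> {-M..M}" "0 \<le> M"
  shows "nlft_astar G z = fst (foldl (column_step G z) (1, 0) [-M..M])"
proof (cases "z = 0")
  case False
  then show ?thesis using nlft_astar_raw_eq_foldl[OF assms] by (simp add: nlft_astar_def)
next
  case True
  define A where "A z = fst (foldl (column_step G z) (1, 0) [-M..M])" for z
  have "continuous_on UNIV A"
    unfolding A_def by (intro continuous_intros continuous_on_foldl_column_step)
  then have "(A \<longlongrightarrow> A 0) (at 0)" by (simp add: continuous_on_def)
  moreover have "\<forall>\<^sub>F w in at 0. A w = nlft_astar_raw G w"
    using nlft_astar_raw_eq_foldl[OF assms] unfolding A_def eventually_at_filter by simp
  ultimately have "(nlft_astar_raw G \<longlongrightarrow> A 0) (at 0)" using tendsto_cong by blast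
  then show ?thesis using True by (simp add: nlft_astar_def A_def tendsto_Lim)
qed

lemma norm_su11_identity:
  fixes a b g :: complex
  shows "(cmod (a + g * b))\<^sup>2 - (cmod (b + cnj g * a))\<^sup>2 = (1 - (cmod g)\<^sup>2) * ((cmod a)\<^sup>2 - (cmod b)\<^sup>2)"
  unfolding cmod_power2 by (simp add: algebra_simps power2_eq_square)

lemma norm_column_step_less:
  assumes "cmod (snd p) < cmod (fst p)" "cmod (G n) < 1" "cmod z \<le> 1"
  shows "cmod (snd (column_step G z p n)) < cmod (fst (column_step G z p n))"
proof -
  obtain a b where p: "p = (a, b)" by (cases p)
  define g where "g = G n"
  have "(cmod b)\<^sup>2 < (cmod a)\<^sup>2" "(cmod g)\<^sup>2 < 1"
    using assms(1,2) p by (simp_all add: power_strict_mono abs_square_less_1 g_def)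
  then have "(cmod (b + cnj g * a))\<^sup>2 < (cmod (a + g * b))\<^sup>2"
    using norm_su11_identity[of a g b] by (smt (verit) mult_pos_pos)
  then have lt: "cmod (b + cnj g * a) < cmod (a + g * b)"
    using power2_less_imp_less by fastforce
  define s where "s = nlft_scale G n"
  have "s > 0" using nlft_scale_pos[of G n, OF assms(2)] by (simp add: s_def)
  have "cmod (snd (column_step G z p n)) = s * cmod z * cmod (b + cnj g * a)"
    using \<open>s > 0\<close> by (simp add: p column_step_def g_def s_def norm_mult)
  also have "\<dots> \<le> s * cmod (b + cnj g * a)"
    using assms(3) \<open>s > 0\<close> by (simp add: mult_left_le_one_le mult_right_le_one_le)
  also have "\<dots> < s * cmod (a + g * b)" using lt \<open>s > 0\<close> by simp
  also have "\<dots> = cmod (fst (column_step G z p n))"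
    using \<open>s > 0\<close> by (simp add: p column_step_def g_def s_def norm_mult)
  finally show ?thesis .
qed

lemma norm_foldl_column_step_less:
  assumes "cmod (snd p) < cmod (fst p)" "\<forall>n. cmod (G n) < 1" "cmod z \<le> 1"
  shows "cmod (snd (foldl (column_step G z) p ns)) < cmod (fst (foldl (column_step G z) p ns))"
  using assms(1)
proof (induction ns arbitrary: p)
  case Nil
  then show ?case by simp
next
  case (Cons n ns)
  then show ?case using norm_column_step_less[OF Cons.prems] assms(2,3) by simp
qed

lemma foldl_column_step_at_zero:
  assumes "\<forall>n. cmod (G n) < 1" "r > 0"
  shows "\<exists>r'>0. foldl (column_step G 0) (of_real r, 0) ns = (of_real r', 0)"
  using assms(2)
proof (induction ns arbitrary: r)
  case Nil
  then show ?case by auto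
next
  case (Cons n ns)
  have "column_step G 0 (of_real r, 0) n = (of_real (nlft_scale G n * r), 0)"
    by (simp add: column_step_def)
  then show ?case using Cons.IH[of "nlft_scale G n * r"] Cons.prems nlft_scale_pos[of G n] assms(1) by simp
qed

definition arg_branch :: "(complex \<Rightarrow> complex) \<Rightarrow> (complex \<Rightarrow> real) \<Rightarrow> bool" where
  "arg_branch f \<theta> \<longleftrightarrow> continuous_on (cball 0 1) \<theta> \<and> \<theta> 0 = 0 \<and>
      (\<forall>w\<in>cball 0 1. f w = of_real (cmod (f w)) * cis (\<theta> w)) \<and>
      (\<forall>w. w \<notin> cball 0 1 \<longrightarrow> \<theta> w = 0)"

lemma arg_astar_eq_The: "arg_astar G = (THE \<theta>. arg_branch (nlft_astar G) \<theta>)"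
  unfolding arg_astar_def arg_branch_def by simp

lemma continuous_on_cis_eq_imp_eq:
  fixes \<theta>1 \<theta>2 :: "'a::topological_space \<Rightarrow> real"
  assumes S: "connected S" and cont: "continuous_on S \<theta>1" "continuous_on S \<theta>2"
    and cis: "\<And>w. w \<in> S \<Longrightarrow> cis (\<theta>1 w) = cis (\<theta>2 w)"
    and a: "a \<in> S" "\<theta>1 a = \<theta>2 a" and w: "w \<in> S"
  shows "\<theta>1 w = \<theta>2 w"
proof -
  define h where "h w = (\<theta>1 w - \<theta>2 w) / (2 * pi)" for w
  have h_int: "h w \<in> \<int>" if "w \<in> S" for w
  proof -
    have "sin (\<theta>1 w) = sin (\<theta>2 w) \<and> cos (\<theta>1 w) = cos (\<theta>2 w)"
      using cis[OF that] by (metis cis.sel)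
    then obtain n :: int where "\<theta>1 w = \<theta>2 w + 2 * pi * n" using sin_cos_eq_iff by blast
    then show ?thesis by (simp add: h_def)
  qed
  have "continuous_on S h"
    unfolding h_def by (intro continuous_intros cont) simp
  then have "h constant_on S"
  proof (rule continuous_discrete_range_constant[OF S])
    fix x assume "x \<in> S"
    show "\<exists>e>0. \<forall>y. y \<in> S \<and> h y \<noteq> h x \<longrightarrow> e \<le> norm (h y - h x)"
    proof (intro exI[of _ 1] conjI allI impI)
      fix y assume y: "y \<in> S \<and> h y \<noteq> h x"
      obtain i j :: int where "h x = i" "h y = j" using h_int \<open>x \<in> S\<close> y Ints_cases by metis
      then show "1 \<le> norm (h y - h x)" using y by simp linarith
    qed simp
  qed
  then have "h w = h a" using a w by (auto simp: constant_on_def)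
  then show ?thesis using a by (simp add: h_def)
qed

lemma arg_branch_unique:
  assumes "\<forall>w\<in>cball 0 1. f w \<noteq> 0" "arg_branch f \<theta>1" "arg_branch f \<theta>2"
  shows "\<theta>1 = \<theta>2"
proof
  fix w
  have "cis (\<theta>1 w) = cis (\<theta>2 w)" if "w \<in> cball 0 1" for w
    using assms that unfolding arg_branch_def by (metis mult_cancel_left of_real_eq_0_iff norm_eq_zero)
  then show "\<theta>1 w = \<theta>2 w"
    using assms(2,3) continuous_on_cis_eq_imp_eq[of "cball 0 1" \<theta>1 \<theta>2 0 w]
    unfolding arg_branch_def by (cases "w \<in> cball 0 1") auto
qed

lemma The_arg_branch:
  "\<forall>w\<in>cball 0 1. f w \<noteq> 0 \<Longrightarrow> arg_branch f \<theta> \<Longrightarrow> (THE \<theta>. arg_branch f \<theta>) = \<theta>"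
  using arg_branch_unique by blast

lemma arg_branch_exists:
  assumes nz: "\<forall>w\<in>cball 0 1. f w \<noteq> 0" and cont: "continuous_on (cball 0 1) f"
    and f0: "f 0 = of_real r" "r > 0"
  obtains \<theta> where "arg_branch f \<theta>"
proof -
  have "Borsukian (cball (0::complex) 1)"
    by (intro contractible_imp_Borsukian convex_imp_contractible) simp
  moreover have "f \<in> cball 0 1 \<rightarrow> - {0}" using nz by auto
  ultimately obtain g where gc: "continuous_on (cball 0 1) g" and fg: "\<forall>w\<in>cball 0 1. f w = exp (g w)"
    using cont unfolding Borsukian_continuous_logarithm by blast
  have polar: "exp z = of_real (exp (Re z)) * cis (Im z)" for z
    by (simp add: exp_eq_polar)
  have "of_real (exp (Re (g 0))) * cis (Im (g 0)) = of_real r"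
    using fg f0 polar by (metis centre_in_cball zero_le_one)
  then have "cis (Im (g 0)) = of_real (r / exp (Re (g 0)))"
    by (simp add: field_simps)
  then have cis0: "cis (Im (g 0)) = 1" using f0(2)
    by (metis abs_of_pos divide_pos_pos exp_gt_zero norm_cis norm_of_real of_real_1)
  define \<theta> where "\<theta> w = (if w \<in> cball 0 1 then Im (g w) - Im (g 0) else 0)" for w
  have "arg_branch f \<theta>"
    unfolding arg_branch_def
  proof (intro conjI ballI allI impI)
    have "continuous_on (cball 0 1) (\<lambda>w. Im (g w) - Im (g 0))"
      by (intro continuous_intros gc)
    then show "continuous_on (cball 0 1) \<theta>"
      by (rule continuous_on_cong[THEN iffD1, rotated 2]) (auto simp: \<theta>_def)
    show "\<theta> 0 = 0" by (simp add: \<theta>_def)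
    fix w assume w: "w \<in> cball (0::complex) 1"
    have "cis (\<theta> w) = cis (Im (g w))" using cis0 w by (simp add: \<theta>_def flip: cis_divide)
    then show "f w = of_real (cmod (f w)) * cis (\<theta> w)" using fg w polar by (simp add: norm_mult)
  qed (simp add: \<theta>_def)
  then show ?thesis using that by blast
qed

lemma abs_Arg_one_plus_le:
  fixes u :: complex
  assumes "cmod u < 1/2"
  shows "\<bar>Arg (1 + u)\<bar> \<le> 2 * cmod u"
proof -
  have "1 + u \<noteq> 0" using assms by (auto simp: add_eq_0_iff)
  then have "\<bar>Arg (1 + u)\<bar> = \<bar>Im (Ln (1 + u))\<bar>" by (simp add: Arg_eq_Im_Ln)
  also have "\<dots> \<le> cmod (Ln (1 + u))" by (rule abs_Im_le_cmod)
  also have "\<dots> \<le> 2 * cmod u" using assms by (rule norm_Ln_le)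
  finally show ?thesis .
qed

lemma arg_branch_mult:
  assumes \<theta>: "arg_branch f \<theta>" and "t > 0"
    and q: "continuous_on (cball 0 1) q" "\<forall>w\<in>cball 0 1. 0 < Re (q w)" "q 0 = 1"
    and f': "\<forall>w\<in>cball 0 1. f' w = of_real t * f w * q w"
  shows "arg_branch f' (\<lambda>w. if w \<in> cball 0 1 then \<theta> w + Arg (q w) else 0)"
  unfolding arg_branch_def
proof (intro conjI ballI allI impI)
  have "q w \<notin> \<real>\<^sub>\<le>\<^sub>0" if "w \<in> cball 0 1" for w
    using q(2) that by (fastforce simp: complex_nonpos_Reals_iff)
  then have "continuous_on (cball 0 1) (\<lambda>w. \<theta> w + Arg (q w))"
    using \<theta> q(1) unfolding arg_branch_def by (intro continuous_intros) auto
  then show "continuous_on (cball 0 1) (\<lambda>w. if w \<in> cball 0 1 then \<theta> w + Arg (q w) else 0)"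
    by (rule continuous_on_cong[THEN iffD1, rotated 2]) auto
  show "(if 0 \<in> cball 0 1 then \<theta> 0 + Arg (q 0) else 0) = 0"
    using \<theta> q(3) by (simp add: arg_branch_def)
  fix w :: complex assume w: "w \<in> cball 0 1"
  have "f w = of_real (cmod (f w)) * cis (\<theta> w)" using \<theta> w unfolding arg_branch_def by blast
  moreover have "q w = of_real (cmod (q w)) * cis (Arg (q w))"
    by (metis rcis_cmod_Arg rcis_def)
  ultimately have "f' w = of_real (t * cmod (f w) * cmod (q w)) * cis (\<theta> w + Arg (q w))"
    using f' w by (metis (no_types, lifting) cis_mult mult.assoc mult.left_commute of_real_mult)
  moreover have "t * cmod (f w) * cmod (q w) = cmod (f' w)"
    using f' w \<open>t > 0\<close> by (simp add: norm_mult)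
  ultimately show "f' w = of_real (cmod (f' w)) * cis (if w \<in> cball 0 1 then \<theta> w + Arg (q w) else 0)"
    using w by simp
qed simp

lemma The_arg_branch_perturb_le:
  assumes f: "continuous_on (cball 0 1) f" and b: "continuous_on (cball 0 1) b"
    and lt: "\<forall>w\<in>cball 0 1. cmod (b w) < cmod (f w)"
    and f0: "f 0 = of_real r" "r > 0" and b0: "b 0 = 0"
    and f': "\<forall>w\<in>cball 0 1. f' w = of_real t * (f w + g * b w)" and "t > 0"
    and g: "cmod g < 1/2" and w: "w \<in> cball 0 1"
  shows "\<bar>(THE \<theta>. arg_branch f' \<theta>) w - (THE \<theta>. arg_branch f \<theta>) w\<bar> \<le> 2 * cmod g"
proof -
  have nz: "\<forall>w\<in>cball 0 1. f w \<noteq> 0" using lt by (metis norm_ge_zero norm_zero not_less)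
  obtain \<theta> where \<theta>: "arg_branch f \<theta>" using arg_branch_exists[OF nz f f0] .
  define u where "u w = g * b w / f w" for w
  have u_le: "cmod (u w) \<le> cmod g" if "w \<in> cball 0 1" for w
  proof -
    have "cmod (u w) = cmod g * (cmod (b w) / cmod (f w))" by (simp add: u_def norm_mult norm_divide)
    also have "\<dots> \<le> cmod g * 1"
      using lt that nz by (intro mult_left_mono) (auto simp: less_imp_le)
    finally show ?thesis by simp
  qed
  have Re_pos: "0 < Re (1 + u w)" if "w \<in> cball 0 1" for w
    using abs_Re_le_cmod[of "u w"] u_le[OF that] g by simp
  have f'_eq: "f' w = of_real t * f w * (1 + u w)" if "w \<in> cball 0 1" for w
    using f' that nz by (simp add: u_def field_simps)
  have "continuous_on (cball 0 1) (\<lambda>w. 1 + u w)"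
    unfolding u_def using f b nz by (intro continuous_intros) auto
  then have \<theta>': "arg_branch f' (\<lambda>w. if w \<in> cball 0 1 then \<theta> w + Arg (1 + u w) else 0)"
    using \<open>t > 0\<close> Re_pos f'_eq by (intro arg_branch_mult[OF \<theta>]) (auto simp: u_def b0)
  have "\<forall>w\<in>cball 0 1. f' w \<noteq> 0" using f'_eq nz Re_pos \<open>t > 0\<close> by fastforce
  then have "(THE \<theta>. arg_branch f' \<theta>) w - (THE \<theta>. arg_branch f \<theta>) w = Arg (1 + u w)"
    using The_arg_branch[OF _ \<theta>'] The_arg_branch[OF nz \<theta>] w by simp
  also have "\<bar>\<dots>\<bar> \<le> 2 * cmod (u w)" using u_le[OF w] g by (intro abs_Arg_one_plus_le) simp
  finally show ?thesis using u_le[OF w] by simp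
qed

lemma abs_arg_astar_trunc_diff_le:
  assumes F: "\<forall>k. cmod (F k) < 1" and n0: "\<forall>k<n0. F k = 0" and n: "1 \<le> n" "-n < n0"
    and Fn: "cmod (F n) < 1/2" and z: "z \<in> cball 0 1"
  shows "\<bar>arg_astar (trunc F n) z - arg_astar (trunc F (n - 1)) z\<bar> \<le> 2 * cmod (F n)"
proof -
  define G where "G = trunc F (n - 1)"
  define G' where "G' = trunc F n"
  have G_lt1: "\<forall>k. cmod (G k) < 1" "\<forall>k. cmod (G' k) < 1" using F by (simp_all add: G_def G'_def trunc_def)
  have supp: "{k. G k \<noteq> 0} \<subseteq> {-n..n}" "{k. G' k \<noteq> 0} \<subseteq> {-n..n}"
    by (auto simp: G_def G'_def trunc_def split: if_splits)
  have split: "[-n..n] = [-n..n-1] @ [n]" using n by (simp add: upto_rec2)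
  have "G' k = G k" if "k \<in> set [-n..n-1]" for k
    using that n n0 by (auto simp: G_def G'_def trunc_def)
  then have same_steps: "foldl (column_step G' w) (1, 0) [-n..n-1] = foldl (column_step G w) (1, 0) [-n..n-1]" for w
    by (intro foldl_cong) (simp_all add: column_step_def nlft_scale_def)
  define P where "P w = foldl (column_step G w) (1, 0) [-n..n-1]" for w
  have "G n = 0" "G' n = F n" using n by (simp_all add: G_def G'_def trunc_def)
  then have astar_G: "nlft_astar G = (\<lambda>w. fst (P w))"
    and astar_G': "\<forall>w\<in>cball 0 1. nlft_astar G' w = of_real (nlft_scale G' n) * (fst (P w) + F n * snd (P w))"
    using nlft_astar_eq_foldl[OF supp(1)] nlft_astar_eq_foldl[OF supp(2)] n
    by (auto simp: split P_def same_steps column_step_def nlft_scale_def)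
  have "continuous_on (cball 0 1) P" unfolding P_def by (intro continuous_on_foldl_column_step) simp
  then have cont: "continuous_on (cball 0 1) (\<lambda>w. fst (P w))" "continuous_on (cball 0 1) (\<lambda>w. snd (P w))"
    by (auto intro: continuous_intros)
  have lt: "\<forall>w\<in>cball 0 1. cmod (snd (P w)) < cmod (fst (P w))"
    unfolding P_def using norm_foldl_column_step_less[OF _ G_lt1(1)] by simp
  obtain r where "r > 0" "P 0 = (of_real r, 0)"
    using foldl_column_step_at_zero[OF G_lt1(1), of 1 "[-n..n-1]"] unfolding P_def by auto
  then show ?thesis
    using The_arg_branch_perturb_le[OF cont lt _ \<open>r > 0\<close> _ astar_G' nlft_scale_pos[of G' n] Fn z] G_lt1(2)
    unfolding arg_astar_eq_The G_def[symmetric] G'_def[symmetric] astar_G by simp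
qed

theorem lemma4p2:
  "\<exists>C::real. \<forall>F :: int \<Rightarrow> complex.
     (\<forall>n. cmod (F n) < 1) \<and> (\<exists>n0. \<forall>n<n0. F n = 0) \<and> (F \<longlongrightarrow> 0) at_top \<longrightarrow>
       (\<exists>N0. \<forall>n\<ge>N0. \<forall>z\<in>cball 0 1.
          \<bar>arg_astar (trunc F n) z - arg_astar (trunc F (n - 1)) z\<bar> \<le> C * cmod (F n)) \<and>
       (\<forall>\<epsilon>>0. \<exists>N0. \<forall>n\<ge>N0. \<forall>z\<in>cball 0 1.
          \<bar>arg_astar (trunc F n) z - arg_astar (trunc F (n - 1)) z\<bar> < \<epsilon>)"
proof (intro exI[of _ 2] allI impI)
  fix F :: "int \<Rightarrow> complex"
  assume "(\<forall>n. cmod (F n) < 1) \<and> (\<exists>n0. \<forall>n<n0. F n = 0) \<and> (F \<longlongrightarrow> 0) at_top"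
  then obtain n0 where F: "\<forall>n. cmod (F n) < 1" and n0: "\<forall>n<n0. F n = 0" and lim: "(F \<longlongrightarrow> 0) at_top"
    by blast
  let ?d = "\<lambda>n z. \<bar>arg_astar (trunc F n) z - arg_astar (trunc F (n - 1)) z\<bar>"
  have small: "\<forall>\<^sub>F n in at_top. cmod (F n) < e" if "e > 0" for e
    using tendstoD[OF lim that] by simp
  have "\<forall>\<^sub>F n in at_top. cmod (F n) < 1/2" by (rule small) simp
  then have bound: "\<forall>\<^sub>F n in at_top. \<forall>z\<in>cball 0 1. ?d n z \<le> 2 * cmod (F n)"
    using eventually_ge_at_top[of 1] eventually_gt_at_top[of "-n0"]
    by eventually_elim (simp add: abs_arg_astar_trunc_diff_le[OF F n0])
  have uniform: "\<forall>\<^sub>F n in at_top. \<forall>z\<in>cball 0 1. ?d n z < \<epsilon>" if "\<epsilon> > 0" for \<epsilon>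
    using bound small[OF half_gt_zero[OF that]] by eventually_elim force
  from bound uniform
  show "(\<exists>N0. \<forall>n\<ge>N0. \<forall>z\<in>cball 0 1. ?d n z \<le> 2 * cmod (F n)) \<and>
        (\<forall>\<epsilon>>0. \<exists>N0. \<forall>n\<ge>N0. \<forall>z\<in>cball 0 1. ?d n z < \<epsilon>)"
    unfolding eventually_at_top_linorder by blast
qed

end
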